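(* Fix $x\in\mathbb{R}^d$. For every step $t$ and every two distinct centers $c',c''\in C_t$ with $\|c'-c''\|_2\ge D_t/2$, $$\Pr\big\{c'\notin C_{t+1}\text{ or } c''\notin C_{t+1}\mid\mathcal{T}_t\big\}\ge\frac{1}{128d}.$$
   Context: Centers $C=\{c^1,\dots,c^k\}\subset\mathbb{R}^d$, $\delta\in(0,1)$, $\varepsilon=\min\{\delta/(15\ln k),1/320\}$. A median of a finite nonempty $S\subset\mathbb{R}^d$ is a point $m$ such that for every coordinate $i$ each of $\{c\in S:c_i<m_i\}$, $\{c\in S:c_i>m_i\}$ has at most $|S|/2$ elements. Algorithm: $\mathcal{T}_1$ is a root (cell $\mathbb{R}^d$) with assigned centers $C$. For $t=1,2,\dots$, while some leaf has at least two assigned centers: sample independently $i_t$ uniform in $\{1,\dots,d\}$, $\theta_t$ uniform in $(0,1)$, $\sigma_t$ uniform in $\{\pm1\}$; to every leaf $u$ of $\mathcal{T}_t$ with $|C_u|\ge2$ apply Divide-and-Share with $(i,\theta,\sigma)=(i_t,\theta_t,\sigma_t)$, giving $\mathcal{T}_{t+1}$. Divide-and-Share on node $u$: $m^u$ a median of $C_u$, $R_u=\max_{c\in C_u}\|c-m^u\|_2$, $Left=\{c\in C_u:c_i\le m^u_i+(\sigma+\varepsilon)\sqrt\theta R_u\}$, $Right=\{c\in C_u:c_i\ge m^u_i+(\sigma-\varepsilon)\sqrt\theta R_u\}$; if both nonempty, $u$ is split into children $\{y\in u: y_i\le m^u_i+\sigma\sqrt\theta R_u\}$ with centers $Left$ and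 $\{y\in u: y_i> m^u_i+\sigma\sqrt\theta R_u\}$ with centers $Right$; otherwise $u$ is unchanged. For the fixed point $x$, $u_t$ denotes the leaf of $\mathcal{T}_t$ containing $x$, $C_t=C_{u_t}$, and $D_t=\max\{\|a-b\|_2:a,b\in C_t\}$. If the algorithm has stopped before step $s$, $\mathcal{T}_s$ denotes the final tree. *)

theory Defs
  imports "HOL-Probability.Probability"
begin

text \<open>Points of R^d are vectors real^'d indexed by a finite type 'd (d = CARD('d)).
  A node of the tree is a pair (cell, assigned centers).  The tree state T_t is
  represented by the set of its leaves.\<close>

type_synonym 'd node = "(real^'d) set \<times> (real^'d) set"

type_synonym 'd sample = "'d \<times> real \<times> real"

definition is_median :: "(real^'d) set \<Rightarrow> real^'d \<Rightarrow> bool" where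
  "is_median S m \<longleftrightarrow>
     (\<forall>i. real (card {c\<in>S. c$i < m$i}) \<le> real (card S) / 2 \<and>
          real (card {c\<in>S. c$i > m$i}) \<le> real (card S) / 2)"

text \<open>med U S is the median chosen by the algorithm for the node with cell U and centers S.\<close>
definition divide_and_share ::
  "real \<Rightarrow> ((real^'d) set \<Rightarrow> (real^'d) set \<Rightarrow> real^'d) \<Rightarrow> 'd sample \<Rightarrow> 'd node \<Rightarrow> 'd node set" where
  "divide_and_share \<epsilon> med s u = (case s of (i, \<theta>, \<sigma>) \<Rightarrow> case u of (U, S) \<Rightarrow>
     let m = med U S;
         R = Max ((\<lambda>c. norm (c - m)) ` S);
         L = {c\<in>S. c$i \<le> m$i + (\<sigma> + \<epsilon>) * sqrt \<theta> * R};
         Rt = {c\<in>S. c$i \<ge> m$i + (\<sigma> - \<epsilon>) * sqrt \<theta> * R}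
     in if L \<noteq> {} \<and> Rt \<noteq> {}
        then {({y\<in>U. y$i \<le> m$i + \<sigma> * sqrt \<theta> * R}, L),
              ({y\<in>U. y$i > m$i + \<sigma> * sqrt \<theta> * R}, Rt)}
        else {(U, S)})"

text \<open>One round: apply Divide-and-Share with the common sample to every leaf with at
  least two centers.  (If no such leaf exists, the tree is unchanged, which models
  "the final tree" after stopping.)\<close>
definition tree_step ::
  "real \<Rightarrow> ((real^'d) set \<Rightarrow> (real^'d) set \<Rightarrow> real^'d) \<Rightarrow> 'd sample \<Rightarrow> 'd node set \<Rightarrow> 'd node set" where
  "tree_step \<epsilon> med s T = (\<Union>u\<in>T. if card (snd u) \<ge> 2 then divide_and_share \<epsilon> med s u else {u})"

text \<open>tree \<epsilon> med C h t = leaves of T_t (t \<ge> 1), where h s is the sample used at step s.\<close>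
primrec tree ::
  "real \<Rightarrow> ((real^'d) set \<Rightarrow> (real^'d) set \<Rightarrow> real^'d) \<Rightarrow> (real^'d) set \<Rightarrow> (nat \<Rightarrow> 'd sample)
   \<Rightarrow> nat \<Rightarrow> 'd node set" where
  "tree \<epsilon> med C h 0 = {(UNIV, C)}"
| "tree \<epsilon> med C h (Suc t) = (if t = 0 then {(UNIV, C)} else tree_step \<epsilon> med (h t) (tree \<epsilon> med C h t))"

definition leaf_centers :: "'d node set \<Rightarrow> real^'d \<Rightarrow> (real^'d) set" where
  "leaf_centers T x = \<Union>{S. \<exists>U. (U, S) \<in> T \<and> x \<in> U}"

definition diam_centers :: "(real^'d) set \<Rightarrow> real" where
  "diam_centers S = Max ((\<lambda>(a, b). dist a b) ` (S \<times> S))"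

definition sample_space :: "('d::finite) sample measure" where
  "sample_space = measure_pmf (pmf_of_set (UNIV :: 'd set)) \<Otimes>\<^sub>M
     (uniform_measure lborel {0<..<1} \<Otimes>\<^sub>M measure_pmf (pmf_of_set {-1, 1 :: real}))"

end

theory Submission
  imports Defs
begin

(* Centre the leaf of x at its median m and scale by R = max |c - m|.  The median property
   gives R^2 <= 2 D^2, so the rescaled centers a, b of c', c'' satisfy |a|, |b| <= 1 and
   |a - b|^2 >= 1/8.  For a fixed coordinate i and a suitable sign, the cut separates the two
   centers whenever the band sigma sqrt(theta) +- eps sqrt(theta) lies strictly between a_i and
   b_i, which happens on a theta-interval of length at least
   (1 - 2 eps) (a_i - b_i)^2 / 4 - 9/2 eps a_i^2.  Each pair (i, sigma) has probability
   1/(2d), so summing over the coordinates gives at least (1/32 - 73/16 eps) / (2d),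
   which is >= 1/(128 d) for eps <= 1/320. *)

lemma space_sample_space: "space (sample_space :: ('d::finite) sample measure) = UNIV"
  by (simp add: sample_space_def space_pair_measure)

lemma prob_space_sample_space: "prob_space (sample_space :: ('d::finite) sample measure)"
  unfolding sample_space_def
  by (intro prob_space_pair prob_space_uniform_measure measure_pmf.prob_space_axioms) auto

lemma measurable_sample_space_pred:
  assumes "\<And>i. Measurable.pred (borel \<Otimes>\<^sub>M borel) (\<lambda>p. P i (fst p) (snd p))"
  shows "Measurable.pred (sample_space :: ('d::finite) sample measure) (\<lambda>s. P (fst s) (fst (snd s)) (snd (snd s)))"
proof -
  let ?M = "uniform_measure lborel {0<..<1::real} \<Otimes>\<^sub>M measure_pmf (pmf_of_set {-1, 1 :: real})"
  have "(\<lambda>p. p) \<in> measurable ?M (borel \<Otimes>\<^sub>M borel)"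
    by (rule measurable_Pair[where f=fst and g=snd, simplified])
       (auto intro: measurable_compose[OF measurable_snd])
  then have "Measurable.pred sample_space (\<lambda>s. P i (fst (snd s)) (snd (snd s)))" for i
    unfolding sample_space_def
    by (rule measurable_compose[OF measurable_compose[OF measurable_snd] assms[of i]])
  moreover have "Measurable.pred sample_space (\<lambda>s. fst s = i)" for i
    unfolding sample_space_def by measurable
  ultimately have "Measurable.pred sample_space (\<lambda>s. \<exists>i\<in>UNIV. fst s = i \<and> P i (fst (snd s)) (snd (snd s)))"
    by (intro pred_intros_finite pred_intros_logic) auto
  then show ?thesis
    by simp
qed

lemma measure_sample_space_box:
  assumes "0 \<le> l" "u \<le> 1" "\<sigma> \<in> {-1, 1}"
  shows "measure (sample_space :: ('d::finite) sample measure) ({i} \<times> {l<..<u} \<times> {\<sigma>})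
         = max 0 (u - l) / (2 * real CARD('d))"
proof -
  interpret U: prob_space "uniform_measure lborel {0<..<1::real}"
    by (rule prob_space_uniform_measure) auto
  interpret P2: prob_space "uniform_measure lborel {0<..<1::real} \<Otimes>\<^sub>M measure_pmf (pmf_of_set {-1, 1 :: real})"
    by (intro prob_space_pair U.prob_space_axioms measure_pmf.prob_space_axioms)
  have "{0<..<1::real} \<inter> {l<..<u} = {l<..<u}"
    using assms by auto
  then have \<theta>: "emeasure (uniform_measure lborel {0<..<1::real}) {l<..<u} = ennreal (max 0 (u - l))"
    by (cases "l \<le> u") (auto simp: max_def divide_ennreal_def)
  have \<sigma>: "emeasure (measure_pmf (pmf_of_set {-1, 1 :: real})) {\<sigma>} = ennreal (1 / 2)"
    using assms(3) by (auto simp: emeasure_pmf_single)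
  have i: "emeasure (measure_pmf (pmf_of_set (UNIV :: 'd set))) {i} = ennreal (1 / CARD('d))"
    by (simp add: emeasure_pmf_single)
  have "emeasure (sample_space :: 'd sample measure) ({i} \<times> {l<..<u} \<times> {\<sigma>})
      = ennreal (1 / CARD('d)) * (ennreal (max 0 (u - l)) * ennreal (1 / 2))"
    unfolding sample_space_def
    by (simp add: P2.emeasure_pair_measure_Times measure_pmf.emeasure_pair_measure_Times i \<theta> \<sigma>)
  also have "\<dots> = ennreal (max 0 (u - l) / (2 * real CARD('d)))"
    by (simp add: ennreal_mult'[symmetric] del: ennreal_half ennreal_max_0)
  finally show ?thesis
    by (simp add: measure_def)
qed

lemma measure_sample_space_boxes:
  fixes \<sigma> l u :: "'d::finite \<Rightarrow> real"
  assumes "\<And>i. 0 \<le> l i" "\<And>i. u i \<le> 1" "\<And>i. \<sigma> i \<in> {-1, 1}"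
  shows "measure sample_space (\<Union>i. {i} \<times> {l i<..<u i} \<times> {\<sigma> i})
         = (\<Sum>i\<in>UNIV. max 0 (u i - l i)) / (2 * real CARD('d))"
proof -
  interpret prob_space "sample_space :: 'd sample measure"
    by (rule prob_space_sample_space)
  have "measure sample_space (\<Union>i. {i} \<times> {l i<..<u i} \<times> {\<sigma> i})
      = (\<Sum>i\<in>UNIV. measure sample_space ({i} \<times> {l i<..<u i} \<times> {\<sigma> i}))"
    by (rule finite_measure_finite_Union) (auto simp: disjoint_family_on_def sample_space_def)
  also have "\<dots> = (\<Sum>i\<in>UNIV. max 0 (u i - l i) / (2 * real CARD('d)))"
    by (intro sum.cong refl measure_sample_space_box assms)
  finally show ?thesis
    by (simp add: sum_divide_distrib)
qed

section \<open>Leaves of the tree\<close>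

definition node_step ::
  "real \<Rightarrow> ((real^'d) set \<Rightarrow> (real^'d) set \<Rightarrow> real^'d) \<Rightarrow> 'd sample \<Rightarrow> 'd node \<Rightarrow> 'd node set" where
  "node_step \<epsilon> med s u = (if 2 \<le> card (snd u) then divide_and_share \<epsilon> med s u else {u})"

lemma tree_step_eq_UN: "tree_step \<epsilon> med s T = (\<Union>u\<in>T. node_step \<epsilon> med s u)"
  by (simp add: tree_step_def node_step_def)

lemma divide_and_share_cases:
  obtains "divide_and_share \<epsilon> med s (U, S) = {(U, S)}"
  | i a L R where "divide_and_share \<epsilon> med s (U, S) = {({y\<in>U. y$i \<le> a}, L), ({y\<in>U. a < y$i}, R)}"
      "L \<subseteq> S" "R \<subseteq> S"
proof -
  obtain i \<theta> \<sigma> where s: "s = (i, \<theta>, \<sigma>)"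
    by (cases s)
  define m where "m = med U S"
  define r where "r = sqrt \<theta> * Max ((\<lambda>c. norm (c - m)) ` S)"
  define L where "L = {c\<in>S. c$i \<le> m$i + (\<sigma> + \<epsilon>) * r}"
  define R where "R = {c\<in>S. m$i + (\<sigma> - \<epsilon>) * r \<le> c$i}"
  have ds: "divide_and_share \<epsilon> med s (U, S) = (if L \<noteq> {} \<and> R \<noteq> {}
      then {({y\<in>U. y$i \<le> m$i + \<sigma> * r}, L), ({y\<in>U. m$i + \<sigma> * r < y$i}, R)} else {(U, S)})"
    unfolding divide_and_share_def s m_def r_def L_def R_def by (simp only: prod.case Let_def mult.assoc)
  have "L \<subseteq> S" "R \<subseteq> S"
    unfolding L_def R_def by auto
  then show ?thesis
    using ds that(1) that(2)[of i "m$i + \<sigma> * r" L R] by (auto split: if_splits)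
qed

lemma node_step_subset:
  assumes "v \<in> node_step \<epsilon> med s u"
  shows "fst v \<subseteq> fst u" "snd v \<subseteq> snd u"
proof -
  obtain U S where "u = (U, S)"
    by (cases u)
  with assms have "fst v \<subseteq> fst u \<and> snd v \<subseteq> snd u"
    by (cases rule: divide_and_share_cases[of \<epsilon> med s U S]) (auto simp: node_step_def split: if_splits)
  then show "fst v \<subseteq> fst u" "snd v \<subseteq> snd u"
    by auto
qed

lemma disjoint_family_on_node_step: "disjoint_family_on fst (node_step \<epsilon> med s u)"
proof -
  obtain U S where "u = (U, S)"
    by (cases u)
  then show ?thesis
    by (cases rule: divide_and_share_cases[of \<epsilon> med s U S])
       (auto simp: node_step_def disjoint_family_on_def)
qed

lemma disjoint_family_on_tree_step:
  assumes "disjoint_family_on fst T"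
  shows "disjoint_family_on fst (tree_step \<epsilon> med s T)"
  unfolding disjoint_family_on_def
proof (intro ballI impI)
  fix v v' assume "v \<in> tree_step \<epsilon> med s T" "v' \<in> tree_step \<epsilon> med s T" "v \<noteq> v'"
  then obtain u u' where u: "u \<in> T" "v \<in> node_step \<epsilon> med s u"
    and u': "u' \<in> T" "v' \<in> node_step \<epsilon> med s u'"
    by (auto simp: tree_step_eq_UN)
  show "fst v \<inter> fst v' = {}"
  proof (cases "u = u'")
    case True
    then show ?thesis
      using disjoint_family_on_node_step u(2) u'(2) \<open>v \<noteq> v'\<close>
      unfolding disjoint_family_on_def by blast
  next
    case False
    then have "fst u \<inter> fst u' = {}"
      using assms u(1) u'(1) unfolding disjoint_family_on_def by blast
    then show ?thesis
      using node_step_subset(1)[OF u(2)] node_step_subset(1)[OF u'(2)] by blast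
  qed
qed

lemma tree_centers_subset:
  assumes "u \<in> tree \<epsilon> med C h t"
  shows "snd u \<subseteq> C"
  using assms
proof (induction t arbitrary: u)
  case (Suc t)
  then show ?case
    by (auto simp: tree_step_eq_UN split: if_splits dest!: node_step_subset(2))
qed simp

lemma disjoint_family_on_tree: "disjoint_family_on fst (tree \<epsilon> med C h t)"
proof (induction t)
  case 0
  then show ?case
    by (simp add: disjoint_family_on_def)
next
  case (Suc t)
  show ?case
  proof (cases "t = 0")
    case True
    then show ?thesis
      by (simp add: disjoint_family_on_def)
  next
    case False
    then show ?thesis
      using Suc.IH by (simp add: disjoint_family_on_tree_step)
  qed
qed

lemma leaf_centers_empty [simp]: "leaf_centers {} x = {}"
  by (simp add: leaf_centers_def)

lemma leaf_centers_insert [simp]: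
  "leaf_centers (insert (U, S) T) x = (if x \<in> U then S else {}) \<union> leaf_centers T x"
  by (auto simp: leaf_centers_def)

lemma leaf_centers_eq:
  assumes "disjoint_family_on fst T" "(U, S) \<in> T" "x \<in> U"
  shows "leaf_centers T x = S"
  using assms unfolding leaf_centers_def disjoint_family_on_def by fastforce

lemma leaf_centers_tree_step:
  assumes "disjoint_family_on fst T" "(U, S) \<in> T" "x \<in> U" "2 \<le> card S"
  shows "leaf_centers (tree_step \<epsilon> med s T) x = leaf_centers (divide_and_share \<epsilon> med s (U, S)) x"
proof -
  have parent: "u = (U, S)" if "u \<in> T" "v \<in> node_step \<epsilon> med s u" "x \<in> fst v" for u v
    using assms(1-3) that node_step_subset(1)[OF that(2)] unfolding disjoint_family_on_def by fastforce
  have "(V, S') \<in> tree_step \<epsilon> med s T \<and> x \<in> V \<longleftrightarrow> (V, S') \<in> divide_and_share \<epsilon> med s (U, S) \<and> x \<in> V"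
    for V S'
  proof
    assume "(V, S') \<in> tree_step \<epsilon> med s T \<and> x \<in> V"
    then obtain u where "u \<in> T" "(V, S') \<in> node_step \<epsilon> med s u" "x \<in> V"
      by (auto simp: tree_step_eq_UN)
    moreover from this have "u = (U, S)"
      using parent by fastforce
    ultimately show "(V, S') \<in> divide_and_share \<epsilon> med s (U, S) \<and> x \<in> V"
      using assms(4) by (simp add: node_step_def)
  next
    assume "(V, S') \<in> divide_and_share \<epsilon> med s (U, S) \<and> x \<in> V"
    then show "(V, S') \<in> tree_step \<epsilon> med s T \<and> x \<in> V"
      using assms(2,4) by (force simp: tree_step_eq_UN node_step_def)
  qed
  then show ?thesis
    unfolding leaf_centers_def by simp
qed

lemma mem_leaf_centers_divide_and_share:
  fixes med :: "(real^'d) set \<Rightarrow> (real^'d) set \<Rightarrow> real^'d" and U S :: "(real^'d) set"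
    and i :: 'd and \<epsilon> \<theta> \<sigma> :: real
  defines "m \<equiv> med U S"
  defines "R \<equiv> Max ((\<lambda>c. norm (c - m)) ` S)"
  defines "lo \<equiv> m$i + (\<sigma> - \<epsilon>) * sqrt \<theta> * R" and "hi \<equiv> m$i + (\<sigma> + \<epsilon>) * sqrt \<theta> * R"
  assumes x: "x \<in> U"
  shows "c \<in> leaf_centers (divide_and_share \<epsilon> med (i, \<theta>, \<sigma>) (U, S)) x \<longleftrightarrow>
    c \<in> S \<and> ((\<exists>c'\<in>S. c'$i \<le> hi) \<and> (\<exists>c'\<in>S. lo \<le> c'$i) \<longrightarrow>
      (if x$i \<le> m$i + \<sigma> * sqrt \<theta> * R then c$i \<le> hi else lo \<le> c$i))"
proof -
  have "divide_and_share \<epsilon> med (i, \<theta>, \<sigma>) (U, S) =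
    (if {c\<in>S. c$i \<le> hi} \<noteq> {} \<and> {c\<in>S. lo \<le> c$i} \<noteq> {}
     then {({y\<in>U. y$i \<le> m$i + \<sigma> * sqrt \<theta> * R}, {c\<in>S. c$i \<le> hi}),
           ({y\<in>U. m$i + \<sigma> * sqrt \<theta> * R < y$i}, {c\<in>S. lo \<le> c$i})}
     else {(U, S)})"
    unfolding divide_and_share_def m_def R_def lo_def hi_def by (simp only: prod.case Let_def)
  then show ?thesis
    using x by auto
qed

section \<open>Spread of the centers around the median\<close>

lemma power2_norm_vec: "(norm v)^2 = (\<Sum>i\<in>UNIV. (v$i)^2)"
  for v :: "real^'d"
  by (simp add: norm_vec_def L2_set_def sum_nonneg)

lemma sq_dist_le_of_upper_half:
  fixes f :: "'a \<Rightarrow> real" and \<mu> v :: real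
  assumes "finite S" "card {c\<in>S. \<mu> < f c} \<le> card S / 2" "\<mu> \<le> v"
  shows "(v - \<mu>)^2 * card S \<le> 2 * (\<Sum>c\<in>S. (v - f c)^2)"
proof -
  define B where "B = {c\<in>S. f c \<le> \<mu>}"
  have "S = {c\<in>S. \<mu> < f c} \<union> B"
    unfolding B_def by auto
  then have "card S \<le> card {c\<in>S. \<mu> < f c} + card B"
    by (metis card_Un_le)
  then have "real (card S) \<le> 2 * card B"
    using assms(2) by linarith
  from mult_right_mono[OF this zero_le_power2[of "v - \<mu>"]]
  have "(v - \<mu>)^2 * card S \<le> 2 * (\<Sum>c\<in>B. (v - \<mu>)^2)"
    by (simp add: algebra_simps)
  also have "\<dots> \<le> 2 * (\<Sum>c\<in>B. (v - f c)^2)"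
    using assms(3) by (intro mult_left_mono sum_mono power_mono) (auto simp: B_def)
  also have "\<dots> \<le> 2 * (\<Sum>c\<in>S. (v - f c)^2)"
    using assms(1) by (intro mult_left_mono sum_mono2) (auto simp: B_def)
  finally show ?thesis .
qed

lemma sq_dist_median_le:
  fixes f :: "'a \<Rightarrow> real" and \<mu> v :: real
  assumes "finite S" "card {c\<in>S. f c < \<mu>} \<le> card S / 2" "card {c\<in>S. \<mu> < f c} \<le> card S / 2"
  shows "(v - \<mu>)^2 * card S \<le> 2 * (\<Sum>c\<in>S. (v - f c)^2)"
proof (cases "\<mu> \<le> v")
  case True
  then show ?thesis
    using sq_dist_le_of_upper_half[OF assms(1,3)] by blast
next
  case False
  have "(- v - - \<mu>)^2 * card S \<le> 2 * (\<Sum>c\<in>S. (- v - - f c)^2)"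
    using False assms(2) by (intro sq_dist_le_of_upper_half[OF assms(1)]) auto
  then show ?thesis
    by (simp add: power2_commute)
qed

lemma dist_le_diam_centers:
  assumes "finite S" "a \<in> S" "b \<in> S"
  shows "dist a b \<le> diam_centers S"
  unfolding diam_centers_def using assms by (intro Max_ge) force+

lemma median_norm_diff_le:
  fixes m c :: "real^'d"
  assumes "finite S" "is_median S m" "c \<in> S"
  shows "(norm (c - m))^2 \<le> 2 * (diam_centers S)^2"
proof -
  have half: "card {c'\<in>S. c'$i < m$i} \<le> card S / 2" "card {c'\<in>S. m$i < c'$i} \<le> card S / 2" for i
    using assms(2) unfolding is_median_def by auto
  have "(norm (c - m))^2 * card S = (\<Sum>i\<in>UNIV. (c$i - m$i)^2 * card S)"
    by (simp add: power2_norm_vec sum_distrib_right)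
  also have "\<dots> \<le> (\<Sum>i\<in>UNIV. 2 * (\<Sum>c'\<in>S. (c$i - c'$i)^2))"
  proof (rule sum_mono)
    fix i
    show "(c$i - m$i)^2 * card S \<le> 2 * (\<Sum>c'\<in>S. (c$i - c'$i)^2)"
      using sq_dist_median_le[OF assms(1), of "\<lambda>c'. c'$i" "m$i" "c$i"] half by simp
  qed
  also have "\<dots> = 2 * (\<Sum>c'\<in>S. (norm (c - c'))^2)"
    by (simp add: power2_norm_vec sum_distrib_left sum.swap[of _ UNIV S])
  also have "\<dots> \<le> 2 * (\<Sum>c'\<in>S. (diam_centers S)^2)"
    using assms(1,3) dist_le_diam_centers
    by (intro mult_left_mono sum_mono power_mono) (auto simp: dist_norm)
  also have "\<dots> = 2 * (diam_centers S)^2 * card S"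
    by simp
  finally have "(norm (c - m))^2 * card S \<le> 2 * (diam_centers S)^2 * card S" .
  moreover have "0 < real (card S)"
    using assms(1,3) card_gt_0_iff by auto
  ultimately show ?thesis
    by (rule mult_right_le_imp_le)
qed

lemma median_radius_bounds:
  fixes m c1 c2 :: "real^'d" and S :: "(real^'d) set"
  defines "R \<equiv> Max ((\<lambda>c. norm (c - m)) ` S)"
  assumes "finite S" "is_median S m" "c1 \<in> S" "c2 \<in> S" "c1 \<noteq> c2"
    and "diam_centers S \<le> 2 * dist c1 c2"
  shows "0 < R" "R^2 \<le> 8 * (dist c1 c2)^2"
proof -
  have le_R: "norm (c - m) \<le> R" if "c \<in> S" for c
    unfolding R_def using assms(2) that by (intro Max_ge) auto
  have "dist c1 c2 \<le> norm (c1 - m) + norm (c2 - m)"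
    by (metis dist_norm dist_triangle2)
  moreover have "0 < dist c1 c2"
    using assms(6) by simp
  ultimately show "0 < R"
    using le_R[OF assms(4)] le_R[OF assms(5)] by linarith
  have "R \<in> (\<lambda>c. norm (c - m)) ` S"
    unfolding R_def using assms(2,4) by (intro Max_in) auto
  then obtain c where "c \<in> S" "R = norm (c - m)"
    by auto
  then have "R^2 \<le> 2 * (diam_centers S)^2"
    using median_norm_diff_le[OF assms(2,3)] by simp
  also have "\<dots> \<le> 2 * (2 * dist c1 c2)^2"
    using assms(7) dist_le_diam_centers[OF assms(2,4,4)] by (intro mult_left_mono power_mono) auto
  finally show "R^2 \<le> 8 * (dist c1 c2)^2"
    by (simp add: power_mult_distrib)
qed

section \<open>Separating cuts\<close>

text \<open>In units of R around the median, the cut of Divide-and-Share sits at \<sigma> sqrt \<theta>, and centers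
  within \<epsilon> sqrt \<theta> of it go to both children.  The condition 0 \<le> \<theta> matters: Isabelle's sqrt
  is odd, so for \<theta> < 0 the band would be reversed.\<close>

definition band_between :: "real \<Rightarrow> real \<Rightarrow> real \<Rightarrow> real \<Rightarrow> real \<Rightarrow> bool" where
  "band_between \<epsilon> \<sigma> \<theta> q p \<longleftrightarrow> 0 \<le> \<theta> \<and> q < (\<sigma> - \<epsilon>) * sqrt \<theta> \<and> (\<sigma> + \<epsilon>) * sqrt \<theta> < p"

lemma band_between_uminus: "band_between \<epsilon> \<sigma> \<theta> q p \<longleftrightarrow> band_between \<epsilon> (- \<sigma>) \<theta> (- p) (- q)"
  unfolding band_between_def by (auto simp: algebra_simps)

lemma divide_and_share_separates:
  fixes med :: "(real^'d) set \<Rightarrow> (real^'d) set \<Rightarrow> real^'d" and U S :: "(real^'d) set"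
  defines "m \<equiv> med U S"
  defines "R \<equiv> Max ((\<lambda>c. norm (c - m)) ` S)"
  assumes "x \<in> U" "c1 \<in> S" "c2 \<in> S" "0 \<le> \<epsilon>" "0 < R"
    and band: "band_between \<epsilon> \<sigma> \<theta> ((c1$i - m$i) / R) ((c2$i - m$i) / R)"
  shows "c1 \<notin> leaf_centers (divide_and_share \<epsilon> med (i, \<theta>, \<sigma>) (U, S)) x
       \<or> c2 \<notin> leaf_centers (divide_and_share \<epsilon> med (i, \<theta>, \<sigma>) (U, S)) x"
proof -
  define lo where "lo = m$i + (\<sigma> - \<epsilon>) * sqrt \<theta> * R"
  define hi where "hi = m$i + (\<sigma> + \<epsilon>) * sqrt \<theta> * R"
  have c1: "c1$i < lo" and c2: "hi < c2$i"
    using band \<open>0 < R\<close> unfolding band_between_def lo_def hi_def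
    by (simp_all add: field_simps)
  have "lo \<le> hi"
    using band \<open>0 \<le> \<epsilon>\<close> \<open>0 < R\<close> unfolding band_between_def lo_def hi_def
    by (simp add: algebra_simps)
  then have "(\<exists>c'\<in>S. c'$i \<le> hi) \<and> (\<exists>c'\<in>S. lo \<le> c'$i)"
    using c1 c2 assms(4,5) by force
  moreover have "c \<in> leaf_centers (divide_and_share \<epsilon> med (i, \<theta>, \<sigma>) (U, S)) x \<longleftrightarrow>
      c \<in> S \<and> ((\<exists>c'\<in>S. c'$i \<le> hi) \<and> (\<exists>c'\<in>S. lo \<le> c'$i) \<longrightarrow>
        (if x$i \<le> m$i + \<sigma> * sqrt \<theta> * R then c$i \<le> hi else lo \<le> c$i))" for c
    unfolding lo_def hi_def R_def m_def by (rule mem_leaf_centers_divide_and_share[OF \<open>x \<in> U\<close>])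
  ultimately show ?thesis
    using c1 c2 by auto
qed

lemma pred_mem_leaf_centers_divide_and_share:
  assumes "finite S" "x \<in> U"
  shows "Measurable.pred (borel \<Otimes>\<^sub>M borel)
    (\<lambda>p. c \<in> leaf_centers (divide_and_share \<epsilon> med (i, fst p, snd p) (U, S)) x)"
  using assms by (simp add: mem_leaf_centers_divide_and_share del: prod.collapse) measurable

lemma sets_band_between:
  fixes a b :: "real^'d::finite"
  shows "{(i, \<theta>, \<sigma>). band_between \<epsilon> \<sigma> \<theta> (a$i) (b$i) \<or> band_between \<epsilon> \<sigma> \<theta> (b$i) (a$i)}
    \<in> sets sample_space"
proof -
  have "Measurable.pred sample_space (\<lambda>s. band_between \<epsilon> (snd (snd s)) (fst (snd s)) (a$fst s) (b$fst s)
      \<or> band_between \<epsilon> (snd (snd s)) (fst (snd s)) (b$fst s) (a$fst s))"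
    by (rule measurable_sample_space_pred[where P="\<lambda>i \<theta> \<sigma>.
        band_between \<epsilon> \<sigma> \<theta> (a$i) (b$i) \<or> band_between \<epsilon> \<sigma> \<theta> (b$i) (a$i)"])
       (simp add: band_between_def)
  from predE[OF this] show ?thesis
    by (simp add: space_sample_space split_beta')
qed

lemma sets_separation_event:
  assumes "finite S" "x \<in> U"
  shows "{s \<in> space sample_space. c1 \<notin> leaf_centers (divide_and_share \<epsilon> med s (U, S)) x \<or>
                                   c2 \<notin> leaf_centers (divide_and_share \<epsilon> med s (U, S)) x}
    \<in> sets (sample_space :: ('d::finite) sample measure)"
proof -
  have [measurable]: "Measurable.pred (borel \<Otimes>\<^sub>M borel)
      (\<lambda>p. c \<in> leaf_centers (divide_and_share \<epsilon> med (i, fst p, snd p) (U, S)) x)" for c and i :: 'd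
    using assms by (rule pred_mem_leaf_centers_divide_and_share)
  have "Measurable.pred (sample_space :: 'd sample measure) (\<lambda>s.
      c1 \<notin> leaf_centers (divide_and_share \<epsilon> med (fst s, fst (snd s), snd (snd s)) (U, S)) x \<or>
      c2 \<notin> leaf_centers (divide_and_share \<epsilon> med (fst s, fst (snd s), snd (snd s)) (U, S)) x)"
    by (rule measurable_sample_space_pred[where P="\<lambda>i \<theta> \<sigma>.
        c1 \<notin> leaf_centers (divide_and_share \<epsilon> med (i, \<theta>, \<sigma>) (U, S)) x \<or>
        c2 \<notin> leaf_centers (divide_and_share \<epsilon> med (i, \<theta>, \<sigma>) (U, S)) x"]) measurable
  from predE[OF this] show ?thesis
    by simp
qed

lemma power2_div_one_plus_ge:
  fixes \<epsilon> z :: real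
  assumes "0 \<le> \<epsilon>"
  shows "(1 - 2 * \<epsilon>) * z^2 \<le> (z / (1 + \<epsilon>))^2"
proof -
  have "(1 - 2 * \<epsilon>) * (1 + \<epsilon>)^2 \<le> 1"
  proof -
    have "(1 - 2 * \<epsilon>) * (1 + \<epsilon>)^2 = 1 - 3 * \<epsilon>^2 - 2 * \<epsilon>^3"
      by (simp add: algebra_simps power2_eq_square power3_eq_cube)
    moreover have "0 \<le> 3 * \<epsilon>^2 + 2 * \<epsilon>^3"
      using assms by simp
    ultimately show ?thesis
      by linarith
  qed
  then have "(1 - 2 * \<epsilon>) * (1 + \<epsilon>)^2 * z^2 \<le> z^2"
    using mult_right_mono[of _ 1 "z^2"] by simp
  then show ?thesis
    using assms by (simp add: power_divide field_simps)
qed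

lemma power2_div_one_minus_le:
  fixes \<epsilon> z :: real
  assumes "0 \<le> \<epsilon>" "\<epsilon> \<le> 1/8"
  shows "(z / (1 - \<epsilon>))^2 \<le> (1 + 5/2 * \<epsilon>) * z^2"
proof -
  have "1 \<le> (1 + 5/2 * \<epsilon>) * (1 - \<epsilon>)^2"
  proof -
    have "(1 + 5/2 * \<epsilon>) * (1 - \<epsilon>)^2 = 1 + \<epsilon> * (1/2 - 4 * \<epsilon> + 5/2 * \<epsilon>^2)"
      by (simp add: algebra_simps power2_eq_square)
    moreover have "0 \<le> \<epsilon> * (1/2 - 4 * \<epsilon> + 5/2 * \<epsilon>^2)"
      using assms by (intro mult_nonneg_nonneg) auto
    ultimately show ?thesis
      by linarith
  qed
  then have "z^2 \<le> (1 + 5/2 * \<epsilon>) * (1 - \<epsilon>)^2 * z^2"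
    using mult_right_mono[of 1 _ "z^2"] by simp
  then show ?thesis
    using assms by (simp add: power_divide field_simps)
qed

lemma band_between_oneI:
  fixes q p \<epsilon> \<theta> :: real
  assumes "0 \<le> p" "0 < \<epsilon>" "\<epsilon> < 1"
    and "(max 0 q / (1 - \<epsilon>))^2 < \<theta>" "\<theta> < (p / (1 + \<epsilon>))^2"
  shows "band_between \<epsilon> 1 \<theta> q p"
proof -
  have "0 \<le> \<theta>"
    using assms(4) zero_le_power2 order.trans less_imp_le by metis
  moreover have "max 0 q / (1 - \<epsilon>) < sqrt \<theta>"
    using assms(4) by (rule real_less_rsqrt)
  then have "q < (1 - \<epsilon>) * sqrt \<theta>"
    using assms(3) by (simp add: pos_divide_less_eq mult.commute)
  moreover have "sqrt \<theta> < p / (1 + \<epsilon>)"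
    using real_sqrt_less_mono[OF assms(5)] assms(1,2) by simp
  then have "(1 + \<epsilon>) * sqrt \<theta> < p"
    using assms(2) by (simp add: pos_less_divide_eq mult.commute)
  ultimately show ?thesis
    unfolding band_between_def by simp
qed

lemma band_length_ge:
  fixes q p \<epsilon> :: real
  assumes "\<bar>q\<bar> \<le> p" "0 < \<epsilon>" "\<epsilon> \<le> 1/8"
  shows "(1 - 2 * \<epsilon>) * (p - q)^2 / 4 - 9/2 * \<epsilon> * q^2 \<le> (p / (1 + \<epsilon>))^2 - (max 0 q / (1 - \<epsilon>))^2"
proof -
  have "(1 - 2 * \<epsilon>) * p^2 \<le> (p / (1 + \<epsilon>))^2"
    using assms(2) by (intro power2_div_one_plus_ge) simp
  moreover have "(max 0 q / (1 - \<epsilon>))^2 \<le> (1 + 5/2 * \<epsilon>) * (max 0 q)^2"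
    using assms(2,3) by (intro power2_div_one_minus_le) auto
  moreover have "(1 - 2 * \<epsilon>) * (p - q)^2 / 4 - 9/2 * \<epsilon> * q^2 \<le> (1 - 2 * \<epsilon>) * p^2 - (1 + 5/2 * \<epsilon>) * (max 0 q)^2"
  proof (cases "0 \<le> q")
    case True
    have "(p - q)^2 \<le> p^2 - q^2"
      using True assms(1) mult_right_mono[of q p q] by (simp add: power2_eq_square algebra_simps)
    then have "(p - q)^2 / 4 \<le> p^2 - q^2"
      using zero_le_power2[of "p - q"] by linarith
    then have "(1 - 2 * \<epsilon>) * ((p - q)^2 / 4) \<le> (1 - 2 * \<epsilon>) * (p^2 - q^2)"
      using assms(3) by (intro mult_left_mono) auto
    then show ?thesis
      using True by (simp add: algebra_simps max_def)
  next
    case False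
    have "(p - q)^2 \<le> (2 * p)^2"
      using assms(1) by (intro power_mono) auto
    then have "(1 - 2 * \<epsilon>) * ((p - q)^2 / 4) \<le> (1 - 2 * \<epsilon>) * p^2"
      using assms(3) by (intro mult_left_mono) (auto simp: power_mult_distrib)
    moreover have "0 \<le> \<epsilon> * q^2"
      using assms(2) by simp
    ultimately show ?thesis
      using False by (simp add: max_def)
  qed
  ultimately show ?thesis
    by linarith
qed

lemma band_interval_nonneg:
  fixes q p \<epsilon> :: real
  assumes "\<bar>q\<bar> \<le> p" "p \<le> 1" "0 < \<epsilon>" "\<epsilon> \<le> 1/8"
  obtains l u where "0 \<le> l" "u \<le> 1" "\<And>\<theta>. l < \<theta> \<Longrightarrow> \<theta> < u \<Longrightarrow> band_between \<epsilon> 1 \<theta> q p"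
    "(1 - 2 * \<epsilon>) * (p - q)^2 / 4 - 9/2 * \<epsilon> * q^2 \<le> max 0 (u - l)"
proof
  have "0 \<le> p / (1 + \<epsilon>)" "p / (1 + \<epsilon>) \<le> 1"
    using assms(1-3) by auto
  then show "(p / (1 + \<epsilon>))^2 \<le> 1"
    by (simp add: power_le_one)
  show "band_between \<epsilon> 1 \<theta> q p"
    if "(max 0 q / (1 - \<epsilon>))^2 < \<theta>" "\<theta> < (p / (1 + \<epsilon>))^2" for \<theta>
    using that assms by (intro band_between_oneI) auto
  show "(1 - 2 * \<epsilon>) * (p - q)^2 / 4 - 9/2 * \<epsilon> * q^2
      \<le> max 0 ((p / (1 + \<epsilon>))^2 - (max 0 q / (1 - \<epsilon>))^2)"
    using band_length_ge[OF assms(1,3,4)] by linarith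
qed simp

lemma band_interval:
  fixes a b \<epsilon> :: real
  assumes "\<bar>a\<bar> \<le> 1" "\<bar>b\<bar> \<le> 1" "0 < \<epsilon>" "\<epsilon> \<le> 1/8"
  obtains \<sigma> l u where "\<sigma> \<in> {-1, 1}" "0 \<le> l" "u \<le> 1"
    "\<And>\<theta>. l < \<theta> \<Longrightarrow> \<theta> < u \<Longrightarrow> band_between \<epsilon> \<sigma> \<theta> a b \<or> band_between \<epsilon> \<sigma> \<theta> b a"
    "(1 - 2 * \<epsilon>) * (a - b)^2 / 4 - 9/2 * \<epsilon> * a^2 \<le> max 0 (u - l)"
proof -
  txt \<open>Swapping a and b, and negating a, b and \<sigma> together, reduce to the case \<bar>q\<bar> \<le> p.\<close>
  have sq: "9/2 * \<epsilon> * y^2 \<le> 9/2 * \<epsilon> * z^2" if "\<bar>y\<bar> \<le> \<bar>z\<bar>" for y z :: real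
    using that assms(3) by (simp add: abs_le_square_iff)
  consider "\<bar>a\<bar> \<le> b" | "\<bar>b\<bar> \<le> a" | "\<bar>a\<bar> \<le> - b" | "\<bar>b\<bar> \<le> - a"
    by linarith
  then show ?thesis
  proof cases
    case 1
    obtain l u where "0 \<le> l" "u \<le> 1" "\<And>\<theta>. l < \<theta> \<Longrightarrow> \<theta> < u \<Longrightarrow> band_between \<epsilon> 1 \<theta> a b"
      "(1 - 2 * \<epsilon>) * (b - a)^2 / 4 - 9/2 * \<epsilon> * a^2 \<le> max 0 (u - l)"
      by (rule band_interval_nonneg[of a b \<epsilon>]) (use 1 assms in auto)
    then show ?thesis
      by (intro that[of 1 l u]) (auto simp: power2_commute)
  next
    case 2
    obtain l u where "0 \<le> l" "u \<le> 1" "\<And>\<theta>. l < \<theta> \<Longrightarrow> \<theta> < u \<Longrightarrow> band_between \<epsilon> 1 \<theta> b a"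
      "(1 - 2 * \<epsilon>) * (a - b)^2 / 4 - 9/2 * \<epsilon> * b^2 \<le> max 0 (u - l)"
      by (rule band_interval_nonneg[of b a \<epsilon>]) (use 2 assms in auto)
    moreover have "9/2 * \<epsilon> * b^2 \<le> 9/2 * \<epsilon> * a^2"
      using 2 sq[of b a] by simp
    ultimately show ?thesis
      by (intro that[of 1 l u]) (auto simp del: mult_le_cancel_left_pos)
  next
    case 3
    obtain l u where "0 \<le> l" "u \<le> 1" "\<And>\<theta>. l < \<theta> \<Longrightarrow> \<theta> < u \<Longrightarrow> band_between \<epsilon> 1 \<theta> (- a) (- b)"
      "(1 - 2 * \<epsilon>) * (- b - - a)^2 / 4 - 9/2 * \<epsilon> * (- a)^2 \<le> max 0 (u - l)"
      by (rule band_interval_nonneg[of "- a" "- b" \<epsilon>]) (use 3 assms in auto)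
    then show ?thesis
      using band_between_uminus[of \<epsilon> "-1" _ b a]
      by (intro that[of "-1" l u]) (auto simp: power2_commute)
  next
    case 4
    obtain l u where "0 \<le> l" "u \<le> 1" "\<And>\<theta>. l < \<theta> \<Longrightarrow> \<theta> < u \<Longrightarrow> band_between \<epsilon> 1 \<theta> (- b) (- a)"
      "(1 - 2 * \<epsilon>) * (- a - - b)^2 / 4 - 9/2 * \<epsilon> * (- b)^2 \<le> max 0 (u - l)"
      by (rule band_interval_nonneg[of "- b" "- a" \<epsilon>]) (use 4 assms in auto)
    moreover have "9/2 * \<epsilon> * b^2 \<le> 9/2 * \<epsilon> * a^2"
      using 4 sq[of b a] by simp
    ultimately show ?thesis
      using band_between_uminus[of \<epsilon> "-1" _ a b]
      by (intro that[of "-1" l u]) (auto simp: power2_commute simp del: mult_le_cancel_left_pos)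
  qed
qed

section \<open>The probability bound\<close>

lemma sum_band_bounds_ge:
  fixes a b :: "real^'d"
  assumes "norm a \<le> 1" "1/8 \<le> (dist a b)^2" "0 \<le> \<epsilon>" "\<epsilon> \<le> 1/320"
  shows "1/64 \<le> (\<Sum>i\<in>UNIV. (1 - 2 * \<epsilon>) * (a$i - b$i)^2 / 4 - 9/2 * \<epsilon> * (a$i)^2)"
proof -
  have "(\<Sum>i\<in>UNIV. (1 - 2 * \<epsilon>) * (a$i - b$i)^2 / 4 - 9/2 * \<epsilon> * (a$i)^2)
      = (1 - 2 * \<epsilon>) / 4 * (dist a b)^2 - 9/2 * \<epsilon> * (norm a)^2"
    by (simp add: power2_norm_vec dist_norm sum_subtractf sum_distrib_left sum_divide_distrib)
  moreover have "(1 - 2 * \<epsilon>) / 4 * (1/8) \<le> (1 - 2 * \<epsilon>) / 4 * (dist a b)^2"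
    using assms by (intro mult_left_mono) auto
  moreover have "9/2 * \<epsilon> * (norm a)^2 \<le> 9/2 * \<epsilon> * 1"
    using assms by (intro mult_left_mono) (auto simp: power_le_one)
  moreover have "(1 - 2 * \<epsilon>) / 4 * (1/8) - 9/2 * \<epsilon> * 1 = 1/32 - 73/16 * \<epsilon>"
    by (simp add: field_simps)
  ultimately show ?thesis
    using assms(4) by linarith
qed

lemma measure_band_between_ge:
  fixes a b :: "real^'d::finite"
  assumes "norm a \<le> 1" "norm b \<le> 1" "1/8 \<le> (dist a b)^2" "0 < \<epsilon>" "\<epsilon> \<le> 1/320"
  shows "1 / (128 * real CARD('d)) \<le> measure sample_space
    {(i, \<theta>, \<sigma>). band_between \<epsilon> \<sigma> \<theta> (a$i) (b$i) \<or> band_between \<epsilon> \<sigma> \<theta> (b$i) (a$i)}"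
    (is "_ \<le> measure sample_space ?B")
proof -
  interpret prob_space "sample_space :: 'd sample measure"
    by (rule prob_space_sample_space)
  have "\<exists>\<sigma> l u. \<sigma> \<in> {-1, 1} \<and> 0 \<le> l \<and> u \<le> 1 \<and>
      (\<forall>\<theta>. l < \<theta> \<longrightarrow> \<theta> < u \<longrightarrow> band_between \<epsilon> \<sigma> \<theta> (a$i) (b$i) \<or> band_between \<epsilon> \<sigma> \<theta> (b$i) (a$i)) \<and>
      (1 - 2 * \<epsilon>) * (a$i - b$i)^2 / 4 - 9/2 * \<epsilon> * (a$i)^2 \<le> max 0 (u - l)" for i
  proof -
    have "\<bar>a$i\<bar> \<le> 1" "\<bar>b$i\<bar> \<le> 1"
      using assms(1,2) component_le_norm_cart order_trans by blast+
    then obtain \<sigma> l u where "\<sigma> \<in> {-1, 1}" "0 \<le> l" "u \<le> 1"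
      "\<And>\<theta>. l < \<theta> \<Longrightarrow> \<theta> < u \<Longrightarrow> band_between \<epsilon> \<sigma> \<theta> (a$i) (b$i) \<or> band_between \<epsilon> \<sigma> \<theta> (b$i) (a$i)"
      "(1 - 2 * \<epsilon>) * (a$i - b$i)^2 / 4 - 9/2 * \<epsilon> * (a$i)^2 \<le> max 0 (u - l)"
      by (rule band_interval[of "a$i" "b$i" \<epsilon>]) (use assms(4,5) in auto)
    then show ?thesis
      by blast
  qed
  then obtain \<sigma> l u where \<sigma>: "\<And>i. \<sigma> i \<in> {-1, 1}" and l: "\<And>i. 0 \<le> l i" and u: "\<And>i. u i \<le> 1"
    and band: "\<And>i \<theta>. l i < \<theta> \<Longrightarrow> \<theta> < u i \<Longrightarrow>
      band_between \<epsilon> (\<sigma> i) \<theta> (a$i) (b$i) \<or> band_between \<epsilon> (\<sigma> i) \<theta> (b$i) (a$i)"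
    and length: "\<And>i. (1 - 2 * \<epsilon>) * (a$i - b$i)^2 / 4 - 9/2 * \<epsilon> * (a$i)^2 \<le> max 0 (u i - l i)"
    by metis
  have "1 / (128 * real CARD('d)) = (1/64) / (2 * real CARD('d))"
    by simp
  also have "\<dots> \<le> (\<Sum>i\<in>UNIV. max 0 (u i - l i)) / (2 * real CARD('d))"
    using order_trans[OF sum_band_bounds_ge[OF assms(1,3) _ assms(5)] sum_mono[OF length]] assms(4)
    by (intro divide_right_mono) auto
  also have "\<dots> = measure sample_space (\<Union>i. {i} \<times> {l i<..<u i} \<times> {\<sigma> i})"
    by (rule measure_sample_space_boxes[OF l u \<sigma>, symmetric])
  also have "\<dots> \<le> measure sample_space ?B"
    using band sets_band_between by (intro finite_measure_mono) fastforce+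
  finally show ?thesis .
qed

lemma measure_divide_and_share_separates_ge:
  fixes c1 c2 :: "real^'d::finite"
  assumes "finite S" "x \<in> U" "is_median S (med U S)" "c1 \<in> S" "c2 \<in> S" "c1 \<noteq> c2"
    and "diam_centers S \<le> 2 * dist c1 c2" "0 < \<epsilon>" "\<epsilon> \<le> 1/320"
  shows "1 / (128 * real CARD('d)) \<le> measure sample_space
    {s \<in> space sample_space. c1 \<notin> leaf_centers (divide_and_share \<epsilon> med s (U, S)) x \<or>
                             c2 \<notin> leaf_centers (divide_and_share \<epsilon> med s (U, S)) x}"
    (is "_ \<le> measure sample_space ?E")
proof -
  interpret prob_space "sample_space :: 'd sample measure"
    by (rule prob_space_sample_space)
  define m where "m = med U S"
  define R where "R = Max ((\<lambda>c. norm (c - m)) ` S)"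
  have R: "0 < R" "R^2 \<le> 8 * (dist c1 c2)^2"
    using median_radius_bounds[OF assms(1) assms(3)[folded m_def] assms(4-7)] unfolding R_def by auto
  have le_R: "norm (c - m) \<le> R" if "c \<in> S" for c
    unfolding R_def using assms(1) that by (intro Max_ge) auto
  define a b where "a = (1 / R) *\<^sub>R (c1 - m)" and "b = (1 / R) *\<^sub>R (c2 - m)"
  have "norm a \<le> 1" "norm b \<le> 1"
    using le_R assms(4,5) R(1) by (simp_all add: a_def b_def divide_le_eq_1)
  moreover have "dist a b = dist c1 c2 / R"
    using R(1) by (simp add: a_def b_def dist_norm flip: scaleR_diff_right)
  then have "1/8 \<le> (dist a b)^2"
    using R by (simp add: power_divide le_divide_eq)
  ultimately have "1 / (128 * real CARD('d)) \<le> measure sample_space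
    {(i, \<theta>, \<sigma>). band_between \<epsilon> \<sigma> \<theta> (a$i) (b$i) \<or> band_between \<epsilon> \<sigma> \<theta> (b$i) (a$i)}"
    using assms(8,9) by (rule measure_band_between_ge)
  also have "\<dots> \<le> measure sample_space ?E"
  proof (rule finite_measure_mono)
    have R0: "0 < Max ((\<lambda>c. norm (c - med U S)) ` S)"
      using R(1) unfolding R_def m_def .
    have nth: "a$i = (c1$i - med U S $ i) / Max ((\<lambda>c. norm (c - med U S)) ` S)"
      "b$i = (c2$i - med U S $ i) / Max ((\<lambda>c. norm (c - med U S)) ` S)" for i
      by (simp_all add: a_def b_def m_def R_def divide_inverse mult.commute)
    show "{(i, \<theta>, \<sigma>). band_between \<epsilon> \<sigma> \<theta> (a$i) (b$i) \<or> band_between \<epsilon> \<sigma> \<theta> (b$i) (a$i)} \<subseteq> ?E"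
      using divide_and_share_separates[where med=med, OF assms(2,4,5) less_imp_le[OF assms(8)] R0]
        divide_and_share_separates[where med=med, OF assms(2,5,4) less_imp_le[OF assms(8)] R0]
      by (auto simp: nth space_sample_space)
    show "?E \<in> sets sample_space"
      using assms(1,2) by (rule sets_separation_event)
  qed
  finally show ?thesis .
qed

theorem lemma3:
  fixes C :: "(real^'d::finite) set" and \<delta> :: real and x :: "real^'d"
    and med :: "(real^'d) set \<Rightarrow> (real^'d) set \<Rightarrow> real^'d"
    and h :: "nat \<Rightarrow> 'd sample" and t :: nat and c1 c2 :: "real^'d"
  assumes "finite C" "C \<noteq> {}" "0 < \<delta>" "\<delta> < 1"
    and "\<forall>U S. finite S \<and> S \<noteq> {} \<longrightarrow> is_median S (med U S)"
    and "1 \<le> t"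
    and "\<forall>s. 1 \<le> s \<and> s < t \<longrightarrow> fst (snd (h s)) \<in> {0<..<1} \<and> snd (snd (h s)) \<in> {-1, 1}"
  defines "\<epsilon> \<equiv> min (\<delta> / (15 * ln (real (card C)))) (1 / 320)"
  defines "Ct \<equiv> leaf_centers (tree \<epsilon> med C h t) x"
  assumes "c1 \<in> Ct" "c2 \<in> Ct" "c1 \<noteq> c2" "dist c1 c2 \<ge> diam_centers Ct / 2"
  shows "measure sample_space
           {s \<in> space sample_space.
              c1 \<notin> leaf_centers (tree_step \<epsilon> med s (tree \<epsilon> med C h t)) x \<or>
              c2 \<notin> leaf_centers (tree_step \<epsilon> med s (tree \<epsilon> med C h t)) x}
         \<ge> 1 / (128 * real CARD('d))"
proof -
  let ?T = "tree \<epsilon> med C h t"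
  obtain U S where leaf: "(U, S) \<in> ?T" "x \<in> U" "c1 \<in> S"
    using assms(10) unfolding Ct_def leaf_centers_def by blast
  have Ct: "Ct = S"
    unfolding Ct_def using disjoint_family_on_tree leaf(1,2) by (rule leaf_centers_eq)
  have "S \<subseteq> C"
    using tree_centers_subset[OF leaf(1)] by simp
  then have "finite S"
    using assms(1) by (rule finite_subset)
  have "2 \<le> card S"
    using \<open>finite S\<close> assms(10-12) Ct card_mono[of S "{c1, c2}"] by auto
  then have "0 < \<epsilon>"
    using card_mono[OF assms(1) \<open>S \<subseteq> C\<close>] assms(3) unfolding \<epsilon>_def by simp
  moreover have "\<epsilon> \<le> 1/320"
    unfolding \<epsilon>_def by simp
  moreover have "is_median S (med U S)"
    using assms(5) \<open>finite S\<close> leaf(3) by auto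
  moreover have "c2 \<in> S" "diam_centers S \<le> 2 * dist c1 c2"
    using assms(11,13) Ct by auto
  ultimately show ?thesis
    unfolding leaf_centers_tree_step[OF disjoint_family_on_tree leaf(1,2) \<open>2 \<le> card S\<close>]
    using \<open>finite S\<close> leaf(2,3) assms(12) by (intro measure_divide_and_share_separates_ge)
qed

end
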